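(* Let $(f,p)$ be a mechanism with $f_1(v,k)=k f_2(v,k)$ for all $(v,k)\in V\times K$. Then $(f,p)$ is incentive compatible if and only if for every $(v,k)\in V\times K$: (1) $f_2(v,k)\le f_2(v',k)$ for all $v'>v$ in $V$; (2) $p(v,k)=p(0,1)+v f_2(v,k)-\int_0^v f_2(t,k)\,dt$; (3) $\int_0^v f_2(t,k')\,dt\le\int_0^v f_2(t,k)\,dt$ for all $k'>k$ in $K$; (4) $\int_0^{vk/k'} f_2(t,k)\,dt\le\int_0^v f_2(t,k')\,dt$ for all $k'>k$ in $K$.
   Context: An agent has private type $(v,k)\in V\times K$, $V=[0,1]$, $K=(0,1]$, and from an outcome $(a_1,a_2,t)$ with $a_1,a_2\in[0,1]$ (quantities of two divisible goods) and $t\in\mathbb{R}$ (payment by the agent) gets utility $U_{(v,k)}(a_1,a_2,t)=v\min\{a_1/k,a_2\}-t$. A mechanism is a pair $(f,p)$ with $f=(f_1,f_2):V\times K\to[0,1]^2$, $p:V\times K\to\mathbb{R}$. It is incentive compatible if $U_{(v,k)}(f(v,k),p(v,k))\ge U_{(v,k)}(f(v',k'),p(v',k'))$ for all types $(v,k),(v',k')$. *)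

theory Defs
  imports "HOL-Analysis.Analysis"
begin

definition typesV :: "real set" where "typesV = {0..1}"
definition typesK :: "real set" where "typesK = {0<..1}"

definition utility :: "real \<Rightarrow> real \<Rightarrow> real \<Rightarrow> real \<Rightarrow> real \<Rightarrow> real" where
  "utility v k a1 a2 t = v * min (a1 / k) a2 - t"

definition mechanism :: "(real \<Rightarrow> real \<Rightarrow> real) \<Rightarrow> (real \<Rightarrow> real \<Rightarrow> real) \<Rightarrow> bool" where
  "mechanism f1 f2 = (\<forall>v\<in>typesV. \<forall>k\<in>typesK. f1 v k \<in> {0..1} \<and> f2 v k \<in> {0..1})"

definition incentive_compatible ::
  "(real \<Rightarrow> real \<Rightarrow> real) \<Rightarrow> (real \<Rightarrow> real \<Rightarrow> real) \<Rightarrow> (real \<Rightarrow> real \<Rightarrow> real) \<Rightarrow> bool" where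
  "incentive_compatible f1 f2 p =
    (\<forall>v\<in>typesV. \<forall>k\<in>typesK. \<forall>v'\<in>typesV. \<forall>k'\<in>typesK.
       utility v k (f1 v k) (f2 v k) (p v k) \<ge> utility v k (f1 v' k') (f2 v' k') (p v' k'))"

end

(* Since f1 = k * f2, a type (v, k) reporting (w, k') ends up with min (k'/k) 1 * f2 w k' complete
   bundles, so it behaves like a single-good buyer of value v * min (k'/k) 1 facing the
   one-dimensional mechanism (f2 _ k', p _ k').  Incentive compatibility therefore splits into
   Myerson's characterisation on every layer k (monotone allocation, envelope payment formula,
   p 0 k = p 0 1 by comparing zero types) and the requirement that the truthful utility
   integral {0..v} (f2 _ k) - p 0 1 is not beaten by the truthful utility of layer k' at the
   effective value: for k' > k this is condition (3), for k' < k it is condition (4). *)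

theory Submission
  imports Defs
begin

lemma integral_mono_on_bounds:
  fixes h :: "real \<Rightarrow> real"
  assumes mono: "mono_on {x..y} h" and "x \<le> y"
  shows "(y - x) * h x \<le> integral {x..y} h" and "integral {x..y} h \<le> (y - x) * h y"
proof -
  have int: "h integrable_on {x..y}"
    using mono by (rule integrable_on_mono_on)
  have "h x \<le> h t" and "h t \<le> h y" if "t \<in> {x..y}" for t
    using that \<open>x \<le> y\<close> by (auto intro: mono_onD[OF mono])
  then have "integral {x..y} (\<lambda>_. h x) \<le> integral {x..y} h"
    and "integral {x..y} h \<le> integral {x..y} (\<lambda>_. h y)"
    by (intro integral_le int integrable_const_ivl; simp)+
  then show "(y - x) * h x \<le> integral {x..y} h" and "integral {x..y} h \<le> (y - x) * h y"
    using \<open>x \<le> y\<close> by (simp_all add: mult.commute)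
qed

lemma integral_increment_ge_mono_on:
  fixes h :: "real \<Rightarrow> real"
  assumes mono: "mono_on {a..b} h" and x: "x \<in> {a..b}" and y: "y \<in> {a..b}"
  shows "(y - x) * h x \<le> integral {a..y} h - integral {a..x} h"
proof (cases "x \<le> y")
  case True
  have "integral {a..x} h + integral {x..y} h = integral {a..y} h"
    using x y True by (intro Henstock_Kurzweil_Integration.integral_combine
        integrable_on_mono_on[OF mono_on_subset[OF mono]]) auto
  moreover have "(y - x) * h x \<le> integral {x..y} h"
    using x y True by (intro integral_mono_on_bounds mono_on_subset[OF mono]) auto
  ultimately show ?thesis
    by linarith
next
  case False
  have "integral {a..y} h + integral {y..x} h = integral {a..x} h"
    using x y False by (intro Henstock_Kurzweil_Integration.integral_combine
        integrable_on_mono_on[OF mono_on_subset[OF mono]]) auto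
  moreover have "integral {y..x} h \<le> (x - y) * h x"
    using x y False by (intro integral_mono_on_bounds mono_on_subset[OF mono]) auto
  ultimately show ?thesis
    by (simp add: algebra_simps)
qed

lemma increments_dominated_partition_bound:
  fixes g h :: "real \<Rightarrow> real"
  assumes "a \<le> b" and "n > 0"
    and incr: "\<And>x y. x \<in> {a..b} \<Longrightarrow> y \<in> {a..b} \<Longrightarrow> x \<le> y \<Longrightarrow>
      \<bar>g y - g x\<bar> \<le> (y - x) * (h y - h x)"
  shows "\<bar>g b - g a\<bar> \<le> (b - a) * (h b - h a) / real n"
proof -
  define c where "c = (b - a) / real n"
  define x where "x m = a + real m * c" for m
  have x_in: "x m \<in> {a..b}" if "m \<le> n" for m
  proof -
    have "real m * (b - a) \<le> real n * (b - a)" and "a * real m \<le> b * real m"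
      using that \<open>a \<le> b\<close> by (auto intro: mult_right_mono)
    then show ?thesis
      using \<open>n > 0\<close> \<open>a \<le> b\<close> by (auto simp: x_def c_def field_simps)
  qed
  have "\<bar>g (x m) - g a\<bar> \<le> c * (h (x m) - h a)" if "m \<le> n" for m
    using that
  proof (induction m)
    case 0
    then show ?case by (simp add: x_def)
  next
    case (Suc m)
    have "c \<ge> 0"
      using \<open>a \<le> b\<close> by (simp add: c_def)
    then have "\<bar>g (x (Suc m)) - g (x m)\<bar> \<le> c * (h (x (Suc m)) - h (x m))"
      using incr[OF x_in[of m] x_in[of "Suc m"]] Suc.prems by (simp add: x_def algebra_simps)
    then have "\<bar>g (x (Suc m)) - g a\<bar> \<le> c * (h (x (Suc m)) - h (x m)) + c * (h (x m) - h a)"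
      using Suc abs_triangle_ineq[of "g (x (Suc m)) - g (x m)" "g (x m) - g a"] by simp
    then show ?case
      by (simp add: algebra_simps)
  qed
  moreover have "x n = b"
    using \<open>n > 0\<close> by (simp add: x_def c_def)
  ultimately show ?thesis
    by (metis order.refl c_def times_divide_eq_left)
qed

lemma eq_if_increments_dominated:
  fixes g h :: "real \<Rightarrow> real"
  assumes "a \<le> b"
    and incr: "\<And>x y. x \<in> {a..b} \<Longrightarrow> y \<in> {a..b} \<Longrightarrow> x \<le> y \<Longrightarrow>
      \<bar>g y - g x\<bar> \<le> (y - x) * (h y - h x)"
  shows "g b = g a"
proof -
  have "(\<lambda>n. (b - a) * (h b - h a) / real n) \<longlonglongrightarrow> 0"
    by (rule lim_const_over_n)
  then have "\<bar>g b - g a\<bar> \<le> 0"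
    using increments_dominated_partition_bound[OF \<open>a \<le> b\<close> _ incr]
    by (intro LIMSEQ_le_const) (auto intro: exI[of _ 1])
  then show ?thesis
    by simp
qed

lemma mono_on_if_subgradients:
  fixes h U :: "real \<Rightarrow> real"
  assumes subgradient: "\<And>x y. x \<in> S \<Longrightarrow> y \<in> S \<Longrightarrow> (y - x) * h x \<le> U y - U x"
  shows "mono_on S h"
proof (rule mono_onI)
  fix x y assume x: "x \<in> S" and y: "y \<in> S" and "x \<le> y"
  have "(y - x) * h x \<le> (y - x) * h y"
    using subgradient[OF x y] subgradient[OF y x] by (simp add: algebra_simps)
  then show "h x \<le> h y"
    using \<open>x \<le> y\<close> by (cases "x = y") (auto simp: mult_le_cancel_left)
qed

lemma envelope_integral_formula:
  fixes h U :: "real \<Rightarrow> real"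
  assumes subgradient: "\<And>x y. x \<in> {a..b} \<Longrightarrow> y \<in> {a..b} \<Longrightarrow> (y - x) * h x \<le> U y - U x"
    and v: "v \<in> {a..b}"
  shows "U v = U a + integral {a..v} h"
proof -
  have mono: "mono_on {a..b} h"
    using subgradient by (rule mono_on_if_subgradients)
  define g where "g x = U x - integral {a..x} h" for x
  have "g v = g a"
  proof (rule eq_if_increments_dominated[where g = g])
    fix x y assume "x \<in> {a..v}" "y \<in> {a..v}" "x \<le> y"
    then have x: "x \<in> {a..b}" and y: "y \<in> {a..b}"
      using v by auto
    show "\<bar>g y - g x\<bar> \<le> (y - x) * (h y - h x)"
      using integral_increment_ge_mono_on[OF mono x y] integral_increment_ge_mono_on[OF mono y x]
        subgradient[OF x y] subgradient[OF y x]
      by (auto simp: g_def abs_le_iff algebra_simps)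
  qed (use v in auto)
  then show ?thesis
    by (simp add: g_def)
qed

definition incentive_compatible_on :: "real set \<Rightarrow> (real \<Rightarrow> real) \<Rightarrow> (real \<Rightarrow> real) \<Rightarrow> bool"
  where "incentive_compatible_on S h P \<longleftrightarrow> (\<forall>x\<in>S. \<forall>y\<in>S. x * h y - P y \<le> x * h x - P x)"

lemma incentive_compatible_on_iff_myerson:
  fixes h P :: "real \<Rightarrow> real"
  shows "incentive_compatible_on {a..b} h P \<longleftrightarrow>
    mono_on {a..b} h \<and> (\<forall>x\<in>{a..b}. P x = P a + x * h x - a * h a - integral {a..x} h)"
proof
  assume ic: "incentive_compatible_on {a..b} h P"
  define U where "U x = x * h x - P x" for x
  have subgradient: "(y - x) * h x \<le> U y - U x" if "x \<in> {a..b}" "y \<in> {a..b}" for x y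
  proof -
    have "y * h x - P x \<le> y * h y - P y"
      using ic that unfolding incentive_compatible_on_def by blast
    then show ?thesis
      by (simp add: U_def algebra_simps)
  qed
  have "P x = P a + x * h x - a * h a - integral {a..x} h" if "x \<in> {a..b}" for x
  proof -
    have "U x = U a + integral {a..x} h"
      using subgradient that by (rule envelope_integral_formula)
    then show ?thesis
      by (simp add: U_def)
  qed
  moreover have "mono_on {a..b} h"
    using subgradient by (rule mono_on_if_subgradients)
  ultimately show
    "mono_on {a..b} h \<and> (\<forall>x\<in>{a..b}. P x = P a + x * h x - a * h a - integral {a..x} h)"
    by blast
next
  assume "mono_on {a..b} h \<and> (\<forall>x\<in>{a..b}. P x = P a + x * h x - a * h a - integral {a..x} h)"
  then have mono: "mono_on {a..b} h"
    and P: "\<And>x. x \<in> {a..b} \<Longrightarrow> P x = P a + x * h x - a * h a - integral {a..x} h"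
    by blast+
  show "incentive_compatible_on {a..b} h P"
    unfolding incentive_compatible_on_def
  proof (intro ballI)
    fix x y assume x: "x \<in> {a..b}" and y: "y \<in> {a..b}"
    show "x * h y - P y \<le> x * h x - P x"
      using integral_increment_ge_mono_on[OF mono y x] unfolding P[OF x] P[OF y] left_diff_distrib
      by linarith
  qed
qed

lemma utility_proportional_allocation:
  fixes v k k' a t :: real
  assumes "0 < k" and "0 \<le> a"
  shows "utility v k (k' * a) a t = v * min (k' / k) 1 * a - t"
proof -
  have "min (k' * a / k) a = min (k' / k) 1 * a"
    using assms by (simp add: min_mult_distrib_right)
  then show ?thesis
    by (simp add: utility_def)
qed

lemma min_ratio_in_typesV:
  assumes "v \<in> typesV" and "k \<in> typesK" and "k' \<in> typesK"
  shows "v * min (k' / k) 1 \<in> typesV"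
proof -
  have "0 \<le> min (k' / k) 1" and "min (k' / k) 1 \<le> 1"
    using assms by (auto simp: typesK_def)
  then show ?thesis
    using assms by (auto simp: typesV_def intro: mult_le_one)
qed

lemma incentive_compatible_iff_effective_value:
  assumes mech: "mechanism f1 f2"
    and lin: "\<forall>v\<in>typesV. \<forall>k\<in>typesK. f1 v k = k * f2 v k"
  shows "incentive_compatible f1 f2 p \<longleftrightarrow>
    (\<forall>v\<in>typesV. \<forall>k\<in>typesK. \<forall>w\<in>typesV. \<forall>k'\<in>typesK.
       v * min (k' / k) 1 * f2 w k' - p w k' \<le> v * f2 v k - p v k)"
proof -
  have "utility v k (f1 w k') (f2 w k') (p w k') = v * min (k' / k) 1 * f2 w k' - p w k'"
    if "k \<in> typesK" "w \<in> typesV" "k' \<in> typesK" for v k w k'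
    using that mech lin utility_proportional_allocation[of k "f2 w k'"] by (auto simp: mechanism_def typesK_def)
  moreover have "min (k / k) 1 = 1" if "k \<in> typesK" for k :: real
    using that by (simp add: typesK_def)
  ultimately show ?thesis
    unfolding incentive_compatible_def by auto
qed

lemma incentive_compatible_imp_conditions:
  assumes mech: "mechanism f1 f2"
    and lin: "\<forall>v\<in>typesV. \<forall>k\<in>typesK. f1 v k = k * f2 v k"
    and ic: "incentive_compatible f1 f2 p"
    and v: "v \<in> typesV" and k: "k \<in> typesK"
  shows "\<forall>v'\<in>typesV. v' > v \<longrightarrow> f2 v k \<le> f2 v' k"
    and "p v k = p 0 1 + v * f2 v k - integral {0..v} (\<lambda>t. f2 t k)"
    and "\<forall>k'\<in>typesK. k' > k \<longrightarrow>
      integral {0..v} (\<lambda>t. f2 t k') \<le> integral {0..v} (\<lambda>t. f2 t k)"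
    and "\<forall>k'\<in>typesK. k' > k \<longrightarrow>
      integral {0..v * k / k'} (\<lambda>t. f2 t k) \<le> integral {0..v} (\<lambda>t. f2 t k')"
proof -
  have report: "v * min (k' / k) 1 * f2 w k' - p w k' \<le> v * f2 v k - p v k"
    if "v \<in> typesV" "k \<in> typesK" "w \<in> typesV" "k' \<in> typesK" for v k w k'
    using ic that unfolding incentive_compatible_iff_effective_value[OF mech lin] by blast
  have layer: "incentive_compatible_on {0..1} (\<lambda>t. f2 t k) (\<lambda>t. p t k)" if "k \<in> typesK" for k
    using report[OF _ that _ that] that
    by (auto simp: incentive_compatible_on_def typesV_def typesK_def)
  have "p 0 k = p 0 1" if "k \<in> typesK" for k
    using report[of 0 k 0 1] report[of 0 1 0 k] that by (simp add: typesV_def typesK_def)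
  then have utility: "v * f2 v k - p v k = integral {0..v} (\<lambda>t. f2 t k) - p 0 1"
    if "v \<in> typesV" "k \<in> typesK" for v k
    using layer[OF that(2)] that unfolding incentive_compatible_on_iff_myerson typesV_def by simp
  show "\<forall>v'\<in>typesV. v' > v \<longrightarrow> f2 v k \<le> f2 v' k"
    using layer[OF k] v unfolding incentive_compatible_on_iff_myerson typesV_def
    by (auto intro: mono_onD)
  show "p v k = p 0 1 + v * f2 v k - integral {0..v} (\<lambda>t. f2 t k)"
    using utility[OF v k] by simp
  show "\<forall>k'\<in>typesK. k' > k \<longrightarrow>
      integral {0..v} (\<lambda>t. f2 t k') \<le> integral {0..v} (\<lambda>t. f2 t k)"
  proof (intro ballI impI)
    fix k' assume k': "k' \<in> typesK" and "k' > k"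
    then have "min (k' / k) 1 = 1"
      using k by (simp add: typesK_def)
    then show "integral {0..v} (\<lambda>t. f2 t k') \<le> integral {0..v} (\<lambda>t. f2 t k)"
      using report[OF v k v k'] utility[OF v k] utility[OF v k'] by simp
  qed
  show "\<forall>k'\<in>typesK. k' > k \<longrightarrow>
      integral {0..v * k / k'} (\<lambda>t. f2 t k) \<le> integral {0..v} (\<lambda>t. f2 t k')"
  proof (intro ballI impI)
    fix k' assume k': "k' \<in> typesK" and "k' > k"
    then have w: "v * min (k / k') 1 = v * k / k'"
      using k by (simp add: typesK_def)
    moreover have "v * k / k' \<in> typesV"
      using min_ratio_in_typesV[OF v k' k] w by simp
    ultimately show "integral {0..v * k / k'} (\<lambda>t. f2 t k) \<le> integral {0..v} (\<lambda>t. f2 t k')"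
      using report[OF v k' _ k, of "v * k / k'"] utility[OF _ k, of "v * k / k'"] utility[OF v k']
      by simp
  qed
qed

lemma conditions_imp_incentive_compatible:
  assumes mech: "mechanism f1 f2"
    and lin: "\<forall>v\<in>typesV. \<forall>k\<in>typesK. f1 v k = k * f2 v k"
    and mono: "\<And>v v' k. v \<in> typesV \<Longrightarrow> v' \<in> typesV \<Longrightarrow> k \<in> typesK \<Longrightarrow> v < v' \<Longrightarrow>
      f2 v k \<le> f2 v' k"
    and payment: "\<And>v k. v \<in> typesV \<Longrightarrow> k \<in> typesK \<Longrightarrow>
      p v k = p 0 1 + v * f2 v k - integral {0..v} (\<lambda>t. f2 t k)"
    and higher: "\<And>v k k'. v \<in> typesV \<Longrightarrow> k \<in> typesK \<Longrightarrow> k' \<in> typesK \<Longrightarrow> k < k' \<Longrightarrow>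
      integral {0..v} (\<lambda>t. f2 t k') \<le> integral {0..v} (\<lambda>t. f2 t k)"
    and lower: "\<And>v k k'. v \<in> typesV \<Longrightarrow> k \<in> typesK \<Longrightarrow> k' \<in> typesK \<Longrightarrow> k < k' \<Longrightarrow>
      integral {0..v * k / k'} (\<lambda>t. f2 t k) \<le> integral {0..v} (\<lambda>t. f2 t k')"
  shows "incentive_compatible f1 f2 p"
proof -
  have layer: "incentive_compatible_on {0..1} (\<lambda>t. f2 t k) (\<lambda>t. p t k)" if k: "k \<in> typesK" for k
    unfolding incentive_compatible_on_iff_myerson
  proof
    show "mono_on {0..1} (\<lambda>t. f2 t k)"
    proof (rule mono_onI)
      fix x y :: real assume "x \<in> {0..1}" "y \<in> {0..1}" "x \<le> y"
      then show "f2 x k \<le> f2 y k"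
        using mono[OF _ _ k, of x y] by (cases "x = y") (auto simp: typesV_def)
    qed
    have "p 0 k = p 0 1"
      using payment[OF _ k, of 0] by (simp add: typesV_def)
    then show "\<forall>x\<in>{0..1}.
      p x k = p 0 k + x * f2 x k - 0 * f2 0 k - integral {0..x} (\<lambda>t. f2 t k)"
      using payment[OF _ k] by (simp add: typesV_def)
  qed
  show ?thesis
    unfolding incentive_compatible_iff_effective_value[OF mech lin]
  proof (intro ballI)
    fix v k w k'
    assume v: "v \<in> typesV" and k: "k \<in> typesK" and w: "w \<in> typesV" and k': "k' \<in> typesK"
    define x where "x = v * min (k' / k) 1"
    have x: "x \<in> typesV"
      unfolding x_def using v k k' by (rule min_ratio_in_typesV)
    have "integral {0..x} (\<lambda>t. f2 t k') \<le> integral {0..v} (\<lambda>t. f2 t k)"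
    proof (cases "k \<le> k'")
      case True
      then show ?thesis
        using higher[OF v k k'] k by (cases "k = k'") (auto simp: x_def typesK_def)
    next
      case False
      then have "x = v * k' / k"
        using k' by (simp add: x_def typesK_def)
      then show ?thesis
        using lower[OF v k' k] False by simp
    qed
    then have "x * f2 x k' - p x k' \<le> v * f2 v k - p v k"
      using payment[OF x k'] payment[OF v k] by simp
    moreover have "x * f2 w k' - p w k' \<le> x * f2 x k' - p x k'"
      using layer[OF k'] x w by (simp add: incentive_compatible_on_def typesV_def)
    ultimately show "v * min (k' / k) 1 * f2 w k' - p w k' \<le> v * f2 v k - p v k"
      by (simp add: x_def)
  qed
qed

theorem proposition3:
  fixes f1 f2 p :: "real \<Rightarrow> real \<Rightarrow> real"
  assumes mech: "mechanism f1 f2"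
    and lin: "\<forall>v\<in>typesV. \<forall>k\<in>typesK. f1 v k = k * f2 v k"
  shows "incentive_compatible f1 f2 p \<longleftrightarrow>
    (\<forall>v\<in>typesV. \<forall>k\<in>typesK.
       (\<forall>v'\<in>typesV. v' > v \<longrightarrow> f2 v k \<le> f2 v' k) \<and>
       p v k = p 0 1 + v * f2 v k - integral {0..v} (\<lambda>t. f2 t k) \<and>
       (\<forall>k'\<in>typesK. k' > k \<longrightarrow>
          integral {0..v} (\<lambda>t. f2 t k') \<le> integral {0..v} (\<lambda>t. f2 t k)) \<and>
       (\<forall>k'\<in>typesK. k' > k \<longrightarrow>
          integral {0..v * k / k'} (\<lambda>t. f2 t k) \<le> integral {0..v} (\<lambda>t. f2 t k')))"
    (is "_ \<longleftrightarrow> ?conditions")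
proof
  show "incentive_compatible f1 f2 p \<Longrightarrow> ?conditions"
    using incentive_compatible_imp_conditions[OF mech lin] by blast
  show "?conditions \<Longrightarrow> incentive_compatible f1 f2 p"
    by (rule conditions_imp_incentive_compatible[OF mech lin]; blast)
qed

end
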